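(* Let $n,d\in\mathbb N$, $t\in[0,1]$, weights $\omega_0,\ldots,\omega_n>0$ and points $\mathbf W_0,\ldots,\mathbf W_n\in\mathbb R^d$ be given. Let $B^n_k(t):=\binom nk t^k(1-t)^{n-k}$ and $$\mathbf R_n(t):=\frac{\sum_{k=0}^n\omega_k\mathbf W_kB^n_k(t)}{\sum_{k=0}^n\omega_kB^n_k(t)}.$$ Define $h_0:=1$, $\mathbf Q_0:=\mathbf W_0$ and, for $k=1,\ldots,n$, $$h_k:=\frac{\omega_kh_{k-1}t(n-k+1)}{\omega_{k-1}k(1-t)+\omega_kh_{k-1}t(n-k+1)},\qquad \mathbf Q_k:=(1-h_k)\mathbf Q_{k-1}+h_k\mathbf W_k.$$ Then for all $k=0,1,\ldots,n$: $h_k\in[0,1]$, $\mathbf Q_k\in\mathbb R^d$, and $\mathbf Q_k\in\operatorname{conv}\{\mathbf W_0,\ldots,\mathbf W_k\}$ (so $\operatorname{conv}\{\mathbf Q_0,\ldots,\mathbf Q_k\}\subseteq\operatorname{conv}\{\mathbf W_0,\ldots,\mathbf W_k\}$). Moreover, $\mathbf R_n(t)=\mathbf Q_n$.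
   Context: $\operatorname{conv}$ denotes the convex hull; $\mathbb E^d$ of the paper is identified with $\mathbb R^d$. $\mathbf R_n$ is the rational Bézier curve of degree $n$ with the given weights and control points. *)

theory Defs
  imports "HOL-Analysis.Analysis"
begin

definition rbezier :: "nat \<Rightarrow> (nat \<Rightarrow> real) \<Rightarrow> (nat \<Rightarrow> 'a::real_vector) \<Rightarrow> real \<Rightarrow> 'a" where
  "rbezier n w W t =
     inverse (\<Sum>k\<le>n. w k * Bernstein n k t) *\<^sub>R (\<Sum>k\<le>n. (w k * Bernstein n k t) *\<^sub>R W k)"

fun hseq :: "nat \<Rightarrow> (nat \<Rightarrow> real) \<Rightarrow> real \<Rightarrow> nat \<Rightarrow> real" where
  "hseq n w t 0 = 1"
| "hseq n w t (Suc k) =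
     (w (Suc k) * hseq n w t k * t * (real n - real k)) /
     (w k * real (Suc k) * (1 - t) + w (Suc k) * hseq n w t k * t * (real n - real k))"

fun Qseq :: "nat \<Rightarrow> (nat \<Rightarrow> real) \<Rightarrow> (nat \<Rightarrow> 'a::real_vector) \<Rightarrow> real \<Rightarrow> nat \<Rightarrow> 'a" where
  "Qseq n w W t 0 = W 0"
| "Qseq n w W t (Suc k) = (1 - hseq n w t (Suc k)) *\<^sub>R Qseq n w W t k + hseq n w t (Suc k) *\<^sub>R W (Suc k)"

end

theory Submission
  imports Defs
begin

text \<open>Writing \<open>S\<^sub>k = \<Sum>\<^sub>j\<^sub>\<le>\<^sub>k \<omega>\<^sub>j B\<^sup>n\<^sub>j(t)\<close> for the partial weights, the recursion for \<open>h\<^sub>k\<close>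
  is exactly the update \<open>h\<^sub>k = \<omega>\<^sub>k B\<^sup>n\<^sub>k(t) / S\<^sub>k\<close>, because consecutive Bernstein
  polynomials satisfy \<open>(n - k) t B\<^sup>n\<^sub>k = (k + 1)(1 - t) B\<^sup>n\<^sub>k\<^sub>+\<^sub>1\<close>. Hence \<open>Q\<^sub>k\<close> is the weighted
  mean of \<open>W\<^sub>0, \<dots>, W\<^sub>k\<close> with weights \<open>\<omega>\<^sub>j B\<^sup>n\<^sub>j(t)\<close>, i.e. \<open>S\<^sub>k Q\<^sub>k = \<Sum>\<^sub>j\<^sub>\<le>\<^sub>k \<omega>\<^sub>j B\<^sup>n\<^sub>j(t) W\<^sub>j\<close>,
  and for \<open>k = n\<close> this is the rational Bezier point. The hull statements only
  use that each \<open>Q\<^sub>k\<close> is a convex combination of \<open>Q\<^sub>k\<^sub>-\<^sub>1\<close> and \<open>W\<^sub>k\<close>.\<close>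

lemma diff_times_binomial: "(n - k) * (n choose k) = Suc k * (n choose Suc k)"
  using binomial_absorb_comp[of n k] binomial_absorption[of k n] by simp

lemma Bernstein_Suc_ratio:
  assumes "k < n"
  shows "Bernstein n k t * t * (real n - real k) = Bernstein n (Suc k) t * real (Suc k) * (1 - t)"
proof -
  have binom: "real (n - k) * real (n choose k) = real (Suc k) * real (n choose Suc k)"
    using diff_times_binomial[of n k] by (metis of_nat_mult)
  have pow: "(1 - t) ^ (n - k) = (1 - t) ^ (n - Suc k) * (1 - t)"
    using assms by (metis Suc_diff_Suc power_Suc2)
  have "Bernstein n k t * t * (real n - real k)
      = (real (n - k) * real (n choose k)) * t ^ Suc k * (1 - t) ^ (n - k)"
    using assms by (simp add: Bernstein_def of_nat_diff algebra_simps)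
  also have "\<dots> = (real (Suc k) * real (n choose Suc k)) * t ^ Suc k * ((1 - t) ^ (n - Suc k) * (1 - t))"
    by (simp only: binom pow)
  also have "\<dots> = Bernstein n (Suc k) t * real (Suc k) * (1 - t)"
    by (simp add: Bernstein_def algebra_simps)
  finally show ?thesis .
qed

lemma hseq_nonneg:
  assumes "t \<in> {0..1}" and "\<forall>j\<le>n. 0 < w j" and "k \<le> n"
  shows "0 \<le> hseq n w t k"
  using assms(3)
proof (induction k)
  case (Suc k)
  have "0 < w k" "0 < w (Suc k)" "0 \<le> hseq n w t k"
    using Suc assms(2) by auto
  then have "0 \<le> w (Suc k) * hseq n w t k * t * (real n - real k)"
    "0 \<le> w k * real (Suc k) * (1 - t)"
    using assms(1) Suc.prems by auto
  then show ?case by simp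
qed simp

lemma hseq_pos:
  assumes "t \<in> {0<..1}" and "\<forall>j\<le>n. 0 < w j" and "k \<le> n"
  shows "0 < hseq n w t k"
  using assms(3)
proof (induction k)
  case (Suc k)
  have "0 < w k" "0 < w (Suc k)" "0 < hseq n w t k"
    using Suc assms(2) by auto
  then have "0 < w (Suc k) * hseq n w t k * t * (real n - real k)"
    "0 \<le> w k * real (Suc k) * (1 - t)"
    using assms(1) Suc.prems by auto
  then show ?case by simp
qed simp

lemma hseq_le_1:
  assumes "t \<in> {0..1}" and "\<forall>j\<le>n. 0 < w j" and "k \<le> n"
  shows "hseq n w t k \<le> 1"
proof (cases k)
  case (Suc j)
  have "0 < w j" "0 < w (Suc j)" "0 \<le> hseq n w t j"
    using assms hseq_nonneg[OF assms(1,2), of j] Suc by auto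
  then have "0 \<le> w (Suc j) * hseq n w t j * t * (real n - real j)"
    "0 \<le> w j * real (Suc j) * (1 - t)"
    using assms(1,3) Suc by auto
  then show ?thesis using Suc by (simp add: divide_le_eq_1) linarith
qed simp

lemma hseq_denominator_pos:
  assumes "t \<in> {0..1}" and "\<forall>j\<le>n. 0 < w j" and "k < n"
  shows "0 < w k * real (Suc k) * (1 - t) + w (Suc k) * hseq n w t k * t * (real n - real k)"
proof (cases "t = 1")
  case True
  then have "0 < hseq n w t k" "0 < w (Suc k)"
    using assms hseq_pos[of t n w k] by auto
  then show ?thesis using True assms(3) by simp
next
  case False
  then have "0 < w k * real (Suc k) * (1 - t)" using assms by simp
  moreover have "0 \<le> hseq n w t k" "0 < w (Suc k)"
    using assms hseq_nonneg[OF assms(1,2), of k] by auto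
  then have "0 \<le> w (Suc k) * hseq n w t k * t * (real n - real k)"
    using assms(1,3) by simp
  ultimately show ?thesis by linarith
qed

definition partial_weight :: "nat \<Rightarrow> (nat \<Rightarrow> real) \<Rightarrow> real \<Rightarrow> nat \<Rightarrow> real" where
  "partial_weight n w t k = (\<Sum>j\<le>k. w j * Bernstein n j t)"

lemma partial_weight_Suc:
  "partial_weight n w t (Suc k) = partial_weight n w t k + w (Suc k) * Bernstein n (Suc k) t"
  by (simp add: partial_weight_def)

lemma partial_weight_times_hseq:
  assumes "t \<in> {0..1}" and "\<forall>j\<le>n. 0 < w j" and "k \<le> n"
  shows "partial_weight n w t k * hseq n w t k = w k * Bernstein n k t"
  using assms(3)
proof (induction k)
  case 0
  then show ?case by (simp add: partial_weight_def)
next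
  case (Suc k)
  define a where "a = w (Suc k) * hseq n w t k * t * (real n - real k)"
  define b where "b = w k * real (Suc k) * (1 - t)"
  have "0 < b + a"
    using hseq_denominator_pos[OF assms(1,2), of k] Suc.prems by (simp add: a_def b_def)
  have "partial_weight n w t k * a = w (Suc k) * w k * (Bernstein n k t * t * (real n - real k))"
    using Suc by (simp add: a_def algebra_simps)
  also have "\<dots> = w (Suc k) * Bernstein n (Suc k) t * b"
    using Bernstein_Suc_ratio[of k n t] Suc.prems by (simp add: b_def)
  finally have Sa: "partial_weight n w t k * a = w (Suc k) * Bernstein n (Suc k) t * b" .
  have "hseq n w t (Suc k) = a / (b + a)"
    by (simp add: a_def b_def)
  then have "partial_weight n w t (Suc k) * hseq n w t (Suc k)
      = (partial_weight n w t k * a + w (Suc k) * Bernstein n (Suc k) t * a) / (b + a)"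
    by (simp add: partial_weight_Suc distrib_right)
  also have "\<dots> = w (Suc k) * Bernstein n (Suc k) t"
    using \<open>0 < b + a\<close> by (simp only: Sa) (simp add: field_simps)
  finally show ?case .
qed

lemma partial_weight_scaleR_Qseq:
  assumes "t \<in> {0..1}" and "\<forall>j\<le>n. 0 < w j" and "k \<le> n"
  shows "partial_weight n w t k *\<^sub>R Qseq n w W t k = (\<Sum>j\<le>k. (w j * Bernstein n j t) *\<^sub>R W j)"
  using assms(3)
proof (induction k)
  case 0
  then show ?case by (simp add: partial_weight_def)
next
  case (Suc k)
  let ?S = "partial_weight n w t (Suc k)" and ?h = "hseq n w t (Suc k)"
  have weight: "?S * ?h = w (Suc k) * Bernstein n (Suc k) t"
    using partial_weight_times_hseq[OF assms(1,2) Suc.prems] .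
  have "?S *\<^sub>R Qseq n w W t (Suc k) = (?S - ?S * ?h) *\<^sub>R Qseq n w W t k + (?S * ?h) *\<^sub>R W (Suc k)"
    by (simp add: algebra_simps)
  also have "\<dots> = partial_weight n w t k *\<^sub>R Qseq n w W t k + (w (Suc k) * Bernstein n (Suc k) t) *\<^sub>R W (Suc k)"
    by (simp only: weight) (simp add: partial_weight_Suc)
  finally show ?case using Suc by simp
qed

lemma partial_weight_pos:
  assumes "t \<in> {0..1}" and "\<forall>j\<le>n. 0 < w j"
  shows "0 < partial_weight n w t n"
proof -
  have nonneg: "\<And>j. j \<in> {..n} \<Longrightarrow> 0 \<le> w j * Bernstein n j t"
    using assms by (simp add: Bernstein_nonneg less_imp_le)
  have "partial_weight n w t n \<noteq> 0"
  proof
    assume "partial_weight n w t n = 0"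
    then have "\<forall>j\<in>{..n}. w j * Bernstein n j t = 0"
      using sum_nonneg_eq_0_iff[of "{..n}" "\<lambda>j. w j * Bernstein n j t"] nonneg
      unfolding partial_weight_def by blast
    then have "(\<Sum>j\<le>n. Bernstein n j t) = 0"
      using assms(2) by (simp add: less_imp_neq[symmetric])
    then show False by simp
  qed
  moreover have "0 \<le> partial_weight n w t n"
    unfolding partial_weight_def by (rule sum_nonneg) (rule nonneg)
  ultimately show ?thesis by simp
qed

lemma Qseq_in_convex_hull:
  assumes "t \<in> {0..1}" and "\<forall>j\<le>n. 0 < w j" and "k \<le> n"
  shows "Qseq n w W t k \<in> convex hull (W ` {0..k})"
  using assms(3)
proof (induction k)
  case 0
  then show ?case by (simp add: hull_inc)
next
  case (Suc k)
  have "convex hull (W ` {0..k}) \<subseteq> convex hull (W ` {0..Suc k})"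
    by (intro hull_mono image_mono) auto
  then have "Qseq n w W t k \<in> convex hull (W ` {0..Suc k})"
    using Suc by auto
  moreover have "W (Suc k) \<in> convex hull (W ` {0..Suc k})"
    by (intro hull_inc) auto
  moreover have "hseq n w t (Suc k) \<in> {0..1}"
    using hseq_nonneg[OF assms(1,2) Suc.prems] hseq_le_1[OF assms(1,2) Suc.prems] by simp
  ultimately show ?case
    unfolding Qseq.simps by (intro convexD_alt convex_convex_hull) auto
qed

lemma convex_hull_prefix_subset:
  fixes Q W :: "nat \<Rightarrow> 'a::real_vector"
  assumes "\<And>j. j \<le> k \<Longrightarrow> Q j \<in> convex hull (W ` {0..j})"
  shows "convex hull (Q ` {0..k}) \<subseteq> convex hull (W ` {0..k})"
proof (rule hull_minimal)
  show "Q ` {0..k} \<subseteq> convex hull (W ` {0..k})"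
  proof
    fix x assume "x \<in> Q ` {0..k}"
    then obtain j where "j \<le> k" "x = Q j" by auto
    moreover have "convex hull (W ` {0..j}) \<subseteq> convex hull (W ` {0..k})"
      using \<open>j \<le> k\<close> by (intro hull_mono image_mono) auto
    ultimately show "x \<in> convex hull (W ` {0..k})" using assms by auto
  qed
qed simp

theorem theorem3:
  fixes n :: nat and t :: real and w :: "nat \<Rightarrow> real" and W :: "nat \<Rightarrow> real ^ 'd"
  assumes "t \<in> {0..1}"
    and "\<And>k. k \<le> n \<Longrightarrow> w k > 0"
  shows "(\<forall>k\<le>n. hseq n w t k \<in> {0..1}
                 \<and> Qseq n w W t k \<in> convex hull (W ` {0..k})
                 \<and> convex hull (Qseq n w W t ` {0..k}) \<subseteq> convex hull (W ` {0..k}))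
         \<and> rbezier n w W t = Qseq n w W t n"
proof -
  have w_pos: "\<forall>j\<le>n. 0 < w j"
    using assms(2) by blast
  show ?thesis
  proof (intro conjI allI impI)
    fix k assume "k \<le> n"
    then show "hseq n w t k \<in> {0..1}"
      using hseq_nonneg[OF assms(1) w_pos] hseq_le_1[OF assms(1) w_pos] by simp
    show "Qseq n w W t k \<in> convex hull (W ` {0..k})"
      using Qseq_in_convex_hull[OF assms(1) w_pos \<open>k \<le> n\<close>] .
    show "convex hull (Qseq n w W t ` {0..k}) \<subseteq> convex hull (W ` {0..k})"
      using Qseq_in_convex_hull[OF assms(1) w_pos, where W=W] \<open>k \<le> n\<close>
      by (intro convex_hull_prefix_subset) simp
  next
    have "rbezier n w W t = inverse (partial_weight n w t n) *\<^sub>R (partial_weight n w t n *\<^sub>R Qseq n w W t n)"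
      unfolding rbezier_def partial_weight_scaleR_Qseq[OF assms(1) w_pos order.refl]
      unfolding partial_weight_def ..
    then show "rbezier n w W t = Qseq n w W t n"
      using partial_weight_pos[OF assms(1) w_pos] by simp
  qed
qed

end
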